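(* Consider $N$ sellers $i=1,\dots,N$ over a time horizon $[0,H]$, a reserve-utility function $\underline{R}:[0,H]\to\mathbb{R}$, and selection functions $f_i:\mathbb{R}^N\times\mathbb{R}\to\mathbb{R}$. Each seller $i$ has true-metric functions $e_i^T,e_i^C:[0,H]\to\mathbb{R}$ and estimated-score functions $\hat e_i^T,\hat e_i^C:[0,H]\to\mathbb{R}$, where we allow $e_i^T\neq e_i^C$ and $\hat e_i^T\ne\hat e_i^C$. In the counterfactual interleaving experiment without feedback loops (defined in the context), let each seller be independently assigned to the treatment group $\mathcal{T}$ with probability $p\in(0,1)$ and otherwise to the control group $\mathcal{C}$. Then $\mathbb{E}[\widehat{GTE}]=\mathrm{GTE}$, where the expectation is over the random assignment.
   Context: Setting without feedback loops: ranking scores equal estimated scores. Global treatment regime: $r_i^{GT}(t)=\hat e_i^T(t)$, $I_i^{GT}(t)=\mathbb{I}\{f_i(r_1^{GT}(t),\dots,r_N^{GT}(t),\underline{R}(t))\ge0\}$, $O_i^{GT}(t)=I_i^{GT}(t)e_i^T(t)$. Global control regime: the same with $\hat e_i^C,e_i^C$, giving $O_i^{GC}$. $\mathrm{GTE}=\frac1N\sum_{i=1}^N\int_0^H(O_i^{GT}(t)-O_i^{GC}(t))dt$. Counterfactual interleaving experiment: given a disjoint partition $\{1,\dots,N\}=\mathcal{T}\cup\mathcal{C}$, two rankings are computed for all sellers, $r_j^T(t)=\hat e_j^T(t)$ and $r_j^C(t)=\hat e_j^C(t)$ for all $j=1,\dots,N$; for $i\in\mathcal{T}$, $I_i^T(t)=\mathbb{I}\{f_i(r_1^T(t),\dots,r_N^T(t),\underline{R}(t))\ge0\}$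 and $O_i^T(t)=I_i^T(t)e_i^T(t)$; for $i\in\mathcal{C}$, $I_i^C(t)=\mathbb{I}\{f_i(r_1^C(t),\dots,r_N^C(t),\underline{R}(t))\ge0\}$ and $O_i^C(t)=I_i^C(t)e_i^C(t)$ (position conflicts between the two rankings are ignored). The estimator is $\widehat{GTE}=\frac{1}{Np}\sum_{i\in\mathcal{T}}\int_0^H O_i^T(t)dt-\frac{1}{N(1-p)}\sum_{i\in\mathcal{C}}\int_0^H O_i^C(t)dt$. *)

theory Defs
  imports "HOL-Analysis.Analysis" "HOL-Probability.Probability"
begin

text \<open>Sellers are the elements of a finite type 'n, so N = CARD('n).
  Selection functions f i : R^N x R -> R; reserve utility Rlow : [0,H] -> R.
  Score / metric functions are indexed by seller and time.\<close>

type_synonym 'n sel = "'n \<Rightarrow> real^'n \<Rightarrow> real \<Rightarrow> real"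

text \<open>Global regime (treatment if ehat = ehat^T, e = e^T; control otherwise):
  r_i(t) = ehat_i(t), I_i(t) = [f_i(r(t), R(t)) >= 0], O_i(t) = I_i(t) e_i(t).\<close>

definition global_rank :: "('n::finite \<Rightarrow> real \<Rightarrow> real) \<Rightarrow> real \<Rightarrow> real^'n" where
  "global_rank ehat t = (\<chi> j. ehat j t)"

definition global_outcome ::
  "'n::finite sel \<Rightarrow> (real \<Rightarrow> real) \<Rightarrow> ('n \<Rightarrow> real \<Rightarrow> real) \<Rightarrow> ('n \<Rightarrow> real \<Rightarrow> real) \<Rightarrow> 'n \<Rightarrow> real \<Rightarrow> real" where
  "global_outcome f Rlow ehat e i t =
     (if f i (global_rank ehat t) (Rlow t) \<ge> 0 then 1 else 0) * e i t"

definition GTE ::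
  "'n::finite sel \<Rightarrow> (real \<Rightarrow> real) \<Rightarrow> real \<Rightarrow> ('n \<Rightarrow> real \<Rightarrow> real) \<Rightarrow> ('n \<Rightarrow> real \<Rightarrow> real)
   \<Rightarrow> ('n \<Rightarrow> real \<Rightarrow> real) \<Rightarrow> ('n \<Rightarrow> real \<Rightarrow> real) \<Rightarrow> real" where
  "GTE f Rlow H eT eC ehT ehC =
     (1 / real CARD('n)) * (\<Sum>i\<in>UNIV. integral {0..H}
        (\<lambda>t. global_outcome f Rlow ehT eT i t - global_outcome f Rlow ehC eC i t))"

text \<open>Counterfactual interleaving experiment: two rankings computed for all sellers;
  a seller in the treatment set Tr uses ranking r^T and metric e^T, a seller outside
  Tr (i.e. in C) uses ranking r^C and metric e^C.\<close>

definition interleave_rank :: "('n::finite \<Rightarrow> real \<Rightarrow> real) \<Rightarrow> real \<Rightarrow> real^'n" where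
  "interleave_rank ehat t = (\<chi> j. ehat j t)"

definition interleave_outcome ::
  "'n::finite sel \<Rightarrow> (real \<Rightarrow> real) \<Rightarrow> ('n \<Rightarrow> real \<Rightarrow> real) \<Rightarrow> ('n \<Rightarrow> real \<Rightarrow> real) \<Rightarrow> 'n \<Rightarrow> real \<Rightarrow> real" where
  "interleave_outcome f Rlow ehat e i t =
     (if f i (interleave_rank ehat t) (Rlow t) \<ge> 0 then 1 else 0) * e i t"

definition GTE_hat ::
  "'n::finite sel \<Rightarrow> (real \<Rightarrow> real) \<Rightarrow> real \<Rightarrow> ('n \<Rightarrow> real \<Rightarrow> real) \<Rightarrow> ('n \<Rightarrow> real \<Rightarrow> real)
   \<Rightarrow> ('n \<Rightarrow> real \<Rightarrow> real) \<Rightarrow> ('n \<Rightarrow> real \<Rightarrow> real) \<Rightarrow> real \<Rightarrow> 'n set \<Rightarrow> real" where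
  "GTE_hat f Rlow H eT eC ehT ehC p Tr =
     (1 / (real CARD('n) * p)) * (\<Sum>i\<in>Tr. integral {0..H} (interleave_outcome f Rlow ehT eT i))
   - (1 / (real CARD('n) * (1 - p))) * (\<Sum>i\<in>UNIV - Tr. integral {0..H} (interleave_outcome f Rlow ehC eC i))"

definition assignment :: "real \<Rightarrow> ('n::finite \<Rightarrow> bool) pmf" where
  "assignment p = Pi_pmf UNIV False (\<lambda>_. bernoulli_pmf p)"

end

theory Submission
  imports Defs
begin

text \<open>Without feedback loops, the interleaving ranking computed from the treatment (control) scores
  coincides with the global treatment (control) ranking, so every treated seller sees exactly its
  outcome under global treatment and every control seller its outcome under global control. The
  estimator is thus a Horvitz-Thompson sum over independent Bernoulli(p) assignments, and its
  expectation is computed seller by seller: treated with probability p and weighted by 1/p, or in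
  control with probability 1 - p and weighted by 1/(1 - p).\<close>

lemma interleave_outcome_eq_global_outcome: "interleave_outcome = global_outcome"
  by (intro ext) (simp add: interleave_outcome_def global_outcome_def interleave_rank_def global_rank_def)

lemma expectation_Pi_bernoulli_sum_if:
  fixes u v :: "'a \<Rightarrow> real"
  assumes "finite A" "0 \<le> p" "p \<le> 1"
  shows "measure_pmf.expectation (Pi_pmf A d (\<lambda>_. bernoulli_pmf p))
           (\<lambda>\<omega>. \<Sum>i\<in>A. if \<omega> i then u i else v i)
         = (\<Sum>i\<in>A. p * u i + (1 - p) * v i)"
proof -
  let ?M = "Pi_pmf A d (\<lambda>_. bernoulli_pmf p)"
  let ?X = "\<lambda>i b. if b then u i else v i"
  have component: "map_pmf (\<lambda>\<omega>. \<omega> i) ?M = bernoulli_pmf p" if "i \<in> A" for i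
    using assms(1) that by (simp add: Pi_pmf_component)
  have integrable: "integrable ?M (\<lambda>\<omega>. ?X i (\<omega> i))" if "i \<in> A" for i
  proof -
    have "integrable (map_pmf (\<lambda>\<omega>. \<omega> i) ?M) (?X i)"
      unfolding component[OF that] by (rule integrable_measure_pmf_finite) simp
    then show ?thesis by simp
  qed
  have "measure_pmf.expectation ?M (\<lambda>\<omega>. \<Sum>i\<in>A. ?X i (\<omega> i))
      = (\<Sum>i\<in>A. measure_pmf.expectation (map_pmf (\<lambda>\<omega>. \<omega> i) ?M) (?X i))"
    using integrable by (simp add: Bochner_Integration.integral_sum)
  also have "\<dots> = (\<Sum>i\<in>A. p * u i + (1 - p) * v i)"
    using assms(2,3) by (intro sum.cong refl) (simp add: component algebra_simps)
  finally show ?thesis .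
qed

lemma GTE_hat_eq_sum_weighted_outcomes:
  fixes f :: "'n::finite sel"
  shows "GTE_hat f Rlow H eT eC ehT ehC p {i. \<omega> i}
   = (\<Sum>i\<in>UNIV. if \<omega> i then integral {0..H} (global_outcome f Rlow ehT eT i) / p
                 else - (integral {0..H} (global_outcome f Rlow ehC eC i) / (1 - p)))
     / real CARD('n)"
proof -
  have split_sum: "(\<Sum>i\<in>UNIV. if \<omega> i then a i else - b i)
      = (\<Sum>i\<in>{i. \<omega> i}. a i) - (\<Sum>i\<in>UNIV - {i. \<omega> i}. b i)" for a b :: "'n \<Rightarrow> real"
    by (simp add: sum.If_cases sum_negf Collect_neg_eq Compl_eq_Diff_UNIV)
  show ?thesis
    unfolding GTE_hat_def interleave_outcome_eq_global_outcome split_sum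
    by (simp add: sum_divide_distrib diff_divide_distrib mult.commute)
qed

lemma GTE_eq_sum_integral_diff:
  fixes f :: "'n::finite sel"
  assumes "\<And>i. global_outcome f Rlow ehT eT i integrable_on {0..H}"
    and "\<And>i. global_outcome f Rlow ehC eC i integrable_on {0..H}"
  shows "GTE f Rlow H eT eC ehT ehC
    = (\<Sum>i\<in>UNIV. integral {0..H} (global_outcome f Rlow ehT eT i)
                 - integral {0..H} (global_outcome f Rlow ehC eC i)) / real CARD('n)"
  using assms by (simp add: GTE_def integral_diff)

theorem proposition2:
  fixes f :: "'n::finite sel" and Rlow :: "real \<Rightarrow> real" and H p :: real
    and eT eC ehT ehC :: "'n \<Rightarrow> real \<Rightarrow> real"
  assumes "0 < p" "p < 1"
    and "\<And>i. global_outcome f Rlow ehT eT i integrable_on {0..H}"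
    and "\<And>i. global_outcome f Rlow ehC eC i integrable_on {0..H}"
  shows "measure_pmf.expectation (assignment p)
           (\<lambda>\<omega>. GTE_hat f Rlow H eT eC ehT ehC p {i. \<omega> i})
         = GTE f Rlow H eT eC ehT ehC"
proof -
  define OT where "OT i = integral {0..H} (global_outcome f Rlow ehT eT i)" for i
  define OC where "OC i = integral {0..H} (global_outcome f Rlow ehC eC i)" for i
  have "measure_pmf.expectation (assignment p) (\<lambda>\<omega>. GTE_hat f Rlow H eT eC ehT ehC p {i. \<omega> i})
      = measure_pmf.expectation (assignment p)
          (\<lambda>\<omega>. \<Sum>i\<in>UNIV. if \<omega> i then OT i / p else - (OC i / (1 - p))) / real CARD('n)"
    unfolding GTE_hat_eq_sum_weighted_outcomes OT_def OC_def by simp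
  also have "\<dots> = (\<Sum>i\<in>UNIV. p * (OT i / p) + (1 - p) * - (OC i / (1 - p))) / real CARD('n)"
    unfolding assignment_def using assms(1,2) by (simp add: expectation_Pi_bernoulli_sum_if)
  also have "\<dots> = (\<Sum>i\<in>UNIV. OT i - OC i) / real CARD('n)"
    using assms(1,2) by simp
  also have "\<dots> = GTE f Rlow H eT eC ehT ehC"
    unfolding OT_def OC_def using assms(3,4) by (simp add: GTE_eq_sum_integral_diff)
  finally show ?thesis .
qed

end
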